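(* Let $r$ be an integer such that $6\le r<\frac nw-2$. For any sequence of $rw$ consecutive nodes of the $n$-cycle, the probability that a uniformly random $\{x,o\}$-labeling of the nodes contains an $x$-firewall incubator that starts among the leftmost $w$ nodes of the sequence and ends among its rightmost $w$ nodes is at least $c^r$, where $c>0$ is a constant independent of $r,w,n$.
   Context: Nodes of an $n$-cycle are indexed mod $n$, each labeled $x$ or $o$ (for a random labeling, independently with probability $1/2$ each). Associate the sign $+1$ to $x$ and $-1$ to $o$; the bias $\beta_0(i)$ of node $i$ is the sum of the signs of the labels of nodes $i-w,\dots,i+w$ (mod $n$). A block is a sequence of consecutive nodes. An $x$-firewall incubator is a block $F$ made up of three consecutive blocks $D_L,I,D_R$ (in this order, left to right) such that: (1) $D_L$ and $D_R$ each have exactly $w+1$ nodes; (2) $\beta_0(i)>\sqrt w$ for all $i\in F$; (3) the minimum of $\beta_0$ over $D_L$ is attained at the left endpoint of $D_L$, and the minimum of $\beta_0$ over $D_R$ is attained at the right endpoint of $D_R$. *)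

theory Defs
  imports Complex_Main
begin

text \<open>A labeling of the n-cycle is a bool list of length n; True = x (sign +1),
  False = o (sign -1). Nodes are integers taken mod n.\<close>

definition lab_sign :: "nat \<Rightarrow> bool list \<Rightarrow> int \<Rightarrow> int" where
  "lab_sign n xs i = (if xs ! nat (i mod int n) then 1 else -1)"

definition bias0 :: "nat \<Rightarrow> nat \<Rightarrow> bool list \<Rightarrow> int \<Rightarrow> int" where
  "bias0 n w xs i = (\<Sum>j\<in>{i - int w .. i + int w}. lab_sign n xs j)"

text \<open>x-firewall incubator F = D_L I D_R occupying nodes a, a+1, ..., a+L-1 (mod n):
  D_L = nodes a..a+w, D_R = nodes a+L-1-w .. a+L-1, I the (possibly empty) middle.\<close>

definition x_firewall_incubator :: "nat \<Rightarrow> nat \<Rightarrow> bool list \<Rightarrow> int \<Rightarrow> nat \<Rightarrow> bool" where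
  "x_firewall_incubator n w xs a L \<longleftrightarrow>
     2 * (w + 1) \<le> L \<and> L \<le> n \<and>
     (\<forall>i\<in>{a .. a + int L - 1}. real_of_int (bias0 n w xs i) > sqrt (real w)) \<and>
     (\<forall>i\<in>{a .. a + int w}. bias0 n w xs a \<le> bias0 n w xs i) \<and>
     (\<forall>i\<in>{a + int L - 1 - int w .. a + int L - 1}.
        bias0 n w xs (a + int L - 1) \<le> bias0 n w xs i)"

definition incubator_event :: "nat \<Rightarrow> nat \<Rightarrow> nat \<Rightarrow> int \<Rightarrow> bool list \<Rightarrow> bool" where
  "incubator_event n w r s xs \<longleftrightarrow>
     (\<exists>a L. a \<in> {s .. s + int w - 1} \<and>
            a + int L - 1 \<in> {s + int (r * w) - int w .. s + int (r * w) - 1} \<and>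
            x_firewall_incubator n w xs a L)"

definition incubator_prob :: "nat \<Rightarrow> nat \<Rightarrow> nat \<Rightarrow> int \<Rightarrow> real" where
  "incubator_prob n w r s =
     real (card {xs :: bool list. length xs = n \<and> incubator_event n w r s xs}) / 2 ^ n"

end

theory Submission
  imports Defs
begin

text \<open>The labelings of the \<open>(r + 2) w\<close> nodes starting \<open>w\<close> nodes to the left of the sequence
  that force an incubator are called seeds here; it suffices to find seeds of total probability
  at least \<open>c\<^sup>r\<close>, since the labels outside are free and rotating the cycle moves the sequence
  anywhere. For \<open>w\<close> below a fixed threshold the all-\<open>x\<close> labeling is a seed. For large \<open>w\<close>,
  cut the nodes into \<open>r + 2\<close> superblocks of length \<open>w\<close>, each made of \<open>K\<close> good blocks: walks
  of length \<open>b\<close> that end at least \<open>\<surd>b/2\<close> above their start and never stray \<open>5\<surd>b\<close> from it.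
  By the second and fourth moments (a Paley--Zygmund bound) and the reflection principle, a
  good block has probability at least \<open>11/800\<close>, so a superblock has probability at least
  \<open>(11/800)\<^sup>K\<close>, independently of the others. The drift of the superblocks keeps all window sums
  above \<open>\<surd>w\<close>; the incubator runs from the minimal window among the first \<open>w\<close> positions to
  the minimal one among the last \<open>w\<close>.\<close>

definition spin :: "bool \<Rightarrow> int" where
  "spin x = (if x then 1 else -1)"

definition spin_sum :: "bool list \<Rightarrow> int" where
  "spin_sum l = sum_list (map spin l)"

lemma spin_simps [simp]: "spin True = 1" "spin False = -1" "\<bar>spin x\<bar> = 1"
  by (auto simp: spin_def)

lemma spin_sum_simps [simp]:
  "spin_sum [] = 0" "spin_sum (x # l) = spin x + spin_sum l"
  "spin_sum (l @ l') = spin_sum l + spin_sum l'"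
  by (auto simp: spin_sum_def)

lemma abs_spin_sum_le: "\<bar>spin_sum l\<bar> \<le> int (length l)"
  by (induction l) (auto simp: spin_def)

lemma spin_sum_map_Not [simp]: "spin_sum (map Not l) = - spin_sum l"
  by (induction l) (auto simp: spin_def)

lemma spin_sum_replicate_True [simp]: "spin_sum (replicate m True) = int m"
  by (induction m) auto

lemma finite_bool_lists: "finite {l::bool list. length l = m}"
  using finite_lists_length_eq[of "UNIV::bool set" m] by simp

lemma finite_bool_lists_such_that: "finite {l::bool list. length l = m \<and> P l}"
  by (rule finite_subset[OF _ finite_bool_lists[of m]]) auto

lemma card_bool_lists: "card {l::bool list. length l = m} = 2 ^ m"
  using card_lists_length_eq[of "UNIV::bool set" m] by (simp add: card_UNIV_bool)

lemma bool_lists_Suc_eq: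
  "{l::bool list. length l = Suc m \<and> P l} =
     Cons True ` {l. length l = m \<and> P (True # l)} \<union> Cons False ` {l. length l = m \<and> P (False # l)}"
proof (rule set_eqI)
  fix l :: "bool list"
  show "l \<in> {l. length l = Suc m \<and> P l} \<longleftrightarrow>
      l \<in> Cons True ` {l. length l = m \<and> P (True # l)} \<union> Cons False ` {l. length l = m \<and> P (False # l)}"
  proof (cases l)
    case (Cons a list) then show ?thesis by (cases a) auto
  qed auto
qed

lemma card_bool_lists_Suc:
  "card {l::bool list. length l = Suc m \<and> P l} =
     card {l. length l = m \<and> P (True # l)} + card {l. length l = m \<and> P (False # l)}"
  unfolding bool_lists_Suc_eq
  by (subst card_Un_disjoint) (auto simp: card_image finite_bool_lists_such_that)

lemma sum_bool_lists_Suc: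
  "(\<Sum>l\<in>{l::bool list. length l = Suc m}. f l) =
     (\<Sum>l\<in>{l. length l = m}. f (True # l)) + (\<Sum>l\<in>{l. length l = m}. f (False # l))"
proof -
  have split: "{l::bool list. length l = Suc m} = Cons True ` {l. length l = m} \<union> Cons False ` {l. length l = m}"
    using bool_lists_Suc_eq[of m "\<lambda>_. True"] by simp
  show ?thesis unfolding split
    by (subst sum.union_disjoint) (auto simp: finite_bool_lists sum.reindex)
qed

lemma card_bool_lists_map_Not:
  "card {l::bool list. length l = m \<and> P l} = card {l. length l = m \<and> P (map Not l)}"
proof -
  have image: "map Not ` {l::bool list. length l = m \<and> P (map Not l)} = {l. length l = m \<and> P l}"
  proof (rule set_eqI)
    fix l :: "bool list"
    show "l \<in> map Not ` {l. length l = m \<and> P (map Not l)} \<longleftrightarrow> l \<in> {l. length l = m \<and> P l}"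
    proof
      assume "l \<in> map Not ` {l. length l = m \<and> P (map Not l)}"
      then show "l \<in> {l. length l = m \<and> P l}" by auto
    next
      assume "l \<in> {l. length l = m \<and> P l}"
      then have "map Not l \<in> {l. length l = m \<and> P (map Not l)}" "l = map Not (map Not l)"
        by (simp_all add: comp_def)
      then show "l \<in> map Not ` {l. length l = m \<and> P (map Not l)}" by (rule rev_image_eqI)
    qed
  qed
  have "inj_on (map Not) A" for A :: "bool list set"
    by (rule inj_on_inverseI[where g = "map Not"]) (simp add: comp_def)
  then show ?thesis unfolding image[symmetric] by (rule card_image)
qed

lemma sum_spin_sum_power2:
  "(\<Sum>l\<in>{l::bool list. length l = m}. (real_of_int (spin_sum l))^2) = real m * 2^m"
proof (induction m)
  case 0
  have "{l::bool list. length l = 0} = {[]}" by auto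
  then show ?case by simp
next
  case (Suc m)
  have "(\<Sum>l\<in>{l::bool list. length l = Suc m}. (real_of_int (spin_sum l))^2)
      = (\<Sum>l\<in>{l. length l = m}. 2 * (real_of_int (spin_sum l))^2 + 2)"
    unfolding sum_bool_lists_Suc
    by (simp add: sum.distrib[symmetric] power2_eq_square algebra_simps)
  also have "\<dots> = 2 * (real m * 2^m) + 2 * 2^m"
    using Suc by (simp add: sum.distrib sum_distrib_left[symmetric] card_bool_lists)
  finally show ?case by (simp add: algebra_simps)
qed

lemma sum_spin_sum_power4:
  "(\<Sum>l\<in>{l::bool list. length l = m}. (real_of_int (spin_sum l))^4) =
     (3 * real m^2 - 2 * real m) * 2^m"
proof (induction m)
  case 0
  have "{l::bool list. length l = 0} = {[]}" by auto
  then show ?case by simp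
next
  case (Suc m)
  have "(\<Sum>l\<in>{l::bool list. length l = Suc m}. (real_of_int (spin_sum l))^4)
     = (\<Sum>l\<in>{l. length l = m}. 2 * (real_of_int (spin_sum l))^4 + 12 * (real_of_int (spin_sum l))^2 + 2)"
    unfolding sum_bool_lists_Suc
    by (simp add: sum.distrib[symmetric] power4_eq_xxxx power2_eq_square algebra_simps)
  also have "\<dots> = 2 * ((3 * real m^2 - 2 * real m) * 2^m) + 12 * (real m * 2^m) + 2 * 2^m"
    using Suc sum_spin_sum_power2[of m]
    by (simp add: sum.distrib sum_distrib_left[symmetric] card_bool_lists)
  finally show ?case by (simp add: algebra_simps power2_eq_square)
qed

section \<open>Good blocks of a simple random walk\<close>

lemma card_le_card_Un_of_subset:
  "finite B \<Longrightarrow> finite C \<Longrightarrow> A \<subseteq> B \<union> C \<Longrightarrow> card A \<le> card B + card C"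
  by (meson card_Un_le card_mono finite_UnI le_trans)

lemma card_spin_sum_nonneg: "2^b \<le> 2 * card {l::bool list. length l = b \<and> 0 \<le> spin_sum l}"
proof -
  have "card {l::bool list. length l = b} \<le>
      card {l. length l = b \<and> 0 \<le> spin_sum l} + card {l. length l = b \<and> spin_sum l \<le> 0}"
    by (rule card_le_card_Un_of_subset) (auto simp: finite_bool_lists_such_that)
  moreover have "card {l::bool list. length l = b \<and> spin_sum l \<le> 0} =
      card {l. length l = b \<and> 0 \<le> spin_sum l}"
    by (subst card_bool_lists_map_Not) simp
  ultimately show ?thesis by (simp add: card_bool_lists)
qed

definition reaches :: "int \<Rightarrow> int \<Rightarrow> bool list \<Rightarrow> bool" where
  "reaches h m l \<longleftrightarrow> (\<exists>t. m \<le> h + spin_sum (take t l))"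

lemma reaches_Nil: "reaches h m [] \<longleftrightarrow> m \<le> h"
  by (simp add: reaches_def)

lemma reaches_Cons: "h < m \<Longrightarrow> reaches h m (x # l) \<longleftrightarrow> reaches (h + spin x) m l"
  unfolding reaches_def
proof
  assume "h < m" "\<exists>t. m \<le> h + spin_sum (take t (x # l))"
  then obtain t where "m \<le> h + spin_sum (take t (x # l))" by blast
  then show "\<exists>t. m \<le> h + spin x + spin_sum (take t l)"
    using \<open>h < m\<close> by (cases t) (auto simp: add.assoc)
next
  assume "\<exists>t. m \<le> h + spin x + spin_sum (take t l)"
  then obtain t where "m \<le> h + spin x + spin_sum (take t l)" by blast
  then show "\<exists>t. m \<le> h + spin_sum (take t (x # l))"
    by (intro exI[of _ "Suc t"]) (simp add: add.assoc)
qed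

text \<open>A weak reflection principle, proved without a reflection map: by induction on the
  length, using that once level \<open>m\<close> is reached, the rest of the walk is at least as likely
  to end above it as below it.\<close>

lemma card_reaches_le:
  "card {l::bool list. length l = b \<and> reaches h m l} \<le> 2 * card {l. length l = b \<and> m \<le> h + spin_sum l}"
proof (induction b arbitrary: h)
  case 0
  have "{l::bool list. length l = 0 \<and> reaches h m l} = {l. length l = 0 \<and> m \<le> h + spin_sum l}"
    by (auto simp: reaches_Nil)
  then show ?case by simp
next
  case (Suc b)
  show ?case
  proof (cases "m \<le> h")
    case True
    have "card {l::bool list. length l = Suc b \<and> reaches h m l} \<le> 2^Suc b"
      using card_mono[OF finite_bool_lists, of "{l. length l = Suc b \<and> reaches h m l}" "Suc b"]
      by (auto simp: card_bool_lists)
    also have "\<dots> \<le> 2 * card {l::bool list. length l = Suc b \<and> 0 \<le> spin_sum l}"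
      by (rule card_spin_sum_nonneg)
    also have "\<dots> \<le> 2 * card {l::bool list. length l = Suc b \<and> m \<le> h + spin_sum l}"
      using True by (intro mult_left_mono card_mono finite_bool_lists_such_that) auto
    finally show ?thesis .
  next
    case False
    then have "card {l::bool list. length l = Suc b \<and> reaches h m l} =
      card {l. length l = b \<and> reaches (h + 1) m l} + card {l. length l = b \<and> reaches (h - 1) m l}"
      by (subst card_bool_lists_Suc) (simp add: reaches_Cons)
    also have "\<dots> \<le> 2 * card {l. length l = b \<and> m \<le> (h + 1) + spin_sum l}
        + 2 * card {l. length l = b \<and> m \<le> (h - 1) + spin_sum l}"
      using Suc.IH[of "h + 1"] Suc.IH[of "h - 1"] by simp
    also have "\<dots> = 2 * card {l. length l = Suc b \<and> m \<le> h + spin_sum l}"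
      by (subst card_bool_lists_Suc) (simp add: algebra_simps)
    finally show ?thesis .
  qed
qed

lemma card_partial_sum_escape_le:
  assumes "0 < m"
  shows "card {l::bool list. length l = b \<and> (\<exists>t. m \<le> \<bar>spin_sum (take t l)\<bar>)} \<le>
    2 * card {l. length l = b \<and> m \<le> \<bar>spin_sum l\<bar>}"
proof -
  let ?Up = "{l::bool list. length l = b \<and> reaches 0 m l}"
  let ?Down = "{l::bool list. length l = b \<and> reaches 0 m (map Not l)}"
  let ?Pos = "{l::bool list. length l = b \<and> m \<le> spin_sum l}"
  let ?Neg = "{l::bool list. length l = b \<and> m \<le> - spin_sum l}"
  have "card ?Neg = card ?Pos" by (subst card_bool_lists_map_Not) simp
  then have "2 * card ?Pos = card (?Pos \<union> ?Neg)"
    using assms by (subst card_Un_disjoint) (auto simp: finite_bool_lists_such_that)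
  also have "?Pos \<union> ?Neg = {l. length l = b \<and> m \<le> \<bar>spin_sum l\<bar>}" by auto
  finally have two_sided: "2 * card ?Pos = card {l. length l = b \<and> m \<le> \<bar>spin_sum l\<bar>}" .
  have "card {l::bool list. length l = b \<and> (\<exists>t. m \<le> \<bar>spin_sum (take t l)\<bar>)} \<le> card (?Up \<union> ?Down)"
    by (intro card_mono) (auto simp: finite_bool_lists_such_that reaches_def take_map abs_if)
  also have "\<dots> \<le> card ?Up + card ?Down" by (rule card_Un_le)
  also have "card ?Down = card ?Up" by (subst card_bool_lists_map_Not) (simp add: comp_def)
  also have "card ?Up \<le> 2 * card ?Pos" using card_reaches_le[of b 0 m] by simp
  finally show ?thesis using two_sided by simp
qed

lemma card_abs_spin_sum_ge:
  assumes "0 < m"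
  shows "real (card {l::bool list. length l = b \<and> m \<le> \<bar>spin_sum l\<bar>}) * (real_of_int m)^2 \<le> real b * 2^b"
proof -
  let ?A = "{l::bool list. length l = b \<and> m \<le> \<bar>spin_sum l\<bar>}"
  have "real (card ?A) * (real_of_int m)^2 = (\<Sum>l\<in>?A. (real_of_int m)^2)" by simp
  also have "\<dots> \<le> (\<Sum>l\<in>?A. (real_of_int (spin_sum l))^2)"
  proof (rule sum_mono)
    fix l assume "l \<in> ?A"
    then have "real_of_int m \<le> \<bar>real_of_int (spin_sum l)\<bar>"
      by (metis (mono_tags) mem_Collect_eq of_int_abs of_int_le_iff)
    then show "(real_of_int m)^2 \<le> (real_of_int (spin_sum l))^2"
      using assms by (metis abs_le_square_iff abs_of_pos of_int_0_less_iff)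
  qed
  also have "\<dots> \<le> (\<Sum>l\<in>{l::bool list. length l = b}. (real_of_int (spin_sum l))^2)"
    by (rule sum_mono2) (auto simp: finite_bool_lists)
  finally show ?thesis by (simp add: sum_spin_sum_power2)
qed

text \<open>A Paley--Zygmund bound: the pointwise inequality
  \<open>S\<^sup>2 \<le> b/4 + [b/4 \<le> S\<^sup>2] (S\<^sup>4/(8b) + 2b)\<close>, summed with the second and fourth moments.\<close>

lemma card_spin_sum_square_ge:
  assumes "0 < b"
  shows "3/16 * 2^b \<le> real (card {l::bool list. length l = b \<and> real b / 4 \<le> (real_of_int (spin_sum l))^2})"
proof -
  let ?U = "{l::bool list. length l = b}"
  let ?A = "{l::bool list. length l = b \<and> real b / 4 \<le> (real_of_int (spin_sum l))^2}"
  define S where "S l = real_of_int (spin_sum l)" for l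
  have b: "0 < real b" using assms by simp
  have pointwise: "(S l)^2 \<le> real b / 4 + (if l \<in> ?A then (S l)^4 / (8 * real b) + 2 * real b else 0)"
    if "l \<in> ?U" for l
  proof (cases "l \<in> ?A")
    case True
    have "0 \<le> ((S l)^2 - 4 * real b)^2" by simp
    then have "8 * real b * (S l)^2 \<le> (S l)^4 + 16 * (real b)^2"
      by (simp add: power2_eq_square power4_eq_xxxx algebra_simps)
    then have "(S l)^2 \<le> (S l)^4 / (8 * real b) + 2 * real b"
      using b by (simp add: field_simps power2_eq_square)
    then show ?thesis using True b by simp
  next
    case False
    then show ?thesis using that by (auto simp: S_def)
  qed
  have "real b * 2^b = (\<Sum>l\<in>?U. (S l)^2)" by (simp add: S_def sum_spin_sum_power2)
  also have "\<dots> \<le> (\<Sum>l\<in>?U. real b / 4 + (if l \<in> ?A then (S l)^4 / (8 * real b) + 2 * real b else 0))"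
    by (rule sum_mono) (rule pointwise)
  also have "\<dots> = real b / 4 * 2^b + (\<Sum>l\<in>?A. (S l)^4 / (8 * real b)) + 2 * real b * card ?A"
    by (simp add: sum.distrib sum.If_cases finite_bool_lists card_bool_lists Int_def conj_commute)
  also have "(\<Sum>l\<in>?A. (S l)^4 / (8 * real b)) \<le> (\<Sum>l\<in>?U. (S l)^4 / (8 * real b))"
    by (rule sum_mono2) (auto simp: finite_bool_lists b)
  also have "\<dots> = (3 * real b^2 - 2 * real b) * 2^b / (8 * real b)"
    by (simp add: S_def sum_divide_distrib[symmetric] sum_spin_sum_power4)
  also have "\<dots> \<le> 3 * real b * 2^b / 8"
    using b by (simp add: field_simps power2_eq_square)
  finally have "real b * (3/16 * 2^b) \<le> real b * real (card ?A)"
    by (simp add: algebra_simps)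
  then show ?thesis using b by (simp only: mult_le_cancel_left_pos)
qed

lemma card_spin_sum_ge_half_sqrt:
  assumes "0 < b"
  shows "3/32 * 2^b \<le> real (card {l::bool list. length l = b \<and> sqrt b / 2 \<le> real_of_int (spin_sum l)})"
proof -
  let ?A = "{l::bool list. length l = b \<and> real b / 4 \<le> (real_of_int (spin_sum l))^2}"
  let ?P = "{l::bool list. length l = b \<and> sqrt b / 2 \<le> real_of_int (spin_sum l)}"
  let ?Q = "{l::bool list. length l = b \<and> sqrt b / 2 \<le> - real_of_int (spin_sum l)}"
  have "?A \<subseteq> ?P \<union> ?Q"
  proof
    fix l assume "l \<in> ?A"
    then have "sqrt (real b / 4) \<le> \<bar>real_of_int (spin_sum l)\<bar>"
      by (simp add: real_le_lsqrt real_sqrt_le_iff)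
    then have "sqrt b / 2 \<le> \<bar>real_of_int (spin_sum l)\<bar>" by (simp add: real_sqrt_divide)
    then show "l \<in> ?P \<union> ?Q" using \<open>l \<in> ?A\<close> by auto
  qed
  then have "card ?A \<le> card ?P + card ?Q"
    by (intro card_le_card_Un_of_subset finite_bool_lists_such_that)
  moreover have "card ?Q = card ?P" by (subst card_bool_lists_map_Not) simp
  ultimately have "real (card ?A) \<le> 2 * real (card ?P)" by simp
  with card_spin_sum_square_ge[OF assms] show ?thesis by linarith
qed

definition good_block :: "nat \<Rightarrow> bool list set" where
  "good_block b = {l. length l = b \<and> sqrt b / 2 \<le> real_of_int (spin_sum l) \<and>
     (\<forall>t. real_of_int \<bar>spin_sum (take t l)\<bar> \<le> 5 * sqrt b)}"

lemma card_partial_sum_exceeds_le: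
  assumes "0 < b"
  shows "real (card {l::bool list. length l = b \<and> (\<exists>t. 5 * sqrt b < real_of_int \<bar>spin_sum (take t l)\<bar>)})
    \<le> 2/25 * 2^b"
proof -
  define m where "m = \<lfloor>5 * sqrt b\<rfloor> + 1"
  have m_iff: "5 * sqrt b < real_of_int k \<longleftrightarrow> m \<le> k" for k
    unfolding m_def using floor_less_iff[of "5 * sqrt b" k] by linarith
  have m: "0 < m" unfolding m_def by simp
  have "(5 * sqrt b)^2 \<le> (real_of_int m)^2"
    using m_iff[of m] by (intro power_mono) auto
  then have m_sq: "25 * real b \<le> (real_of_int m)^2" by (simp add: power_mult_distrib)
  let ?A = "{l::bool list. length l = b \<and> m \<le> \<bar>spin_sum l\<bar>}"
  have "real (card ?A) * (25 * real b) \<le> real (card ?A) * (real_of_int m)^2"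
    using m_sq by (intro mult_left_mono) auto
  with card_abs_spin_sum_ge[OF m, of b] have "real b * (real (card ?A) * 25) \<le> real b * 2^b"
    by (simp add: algebra_simps)
  then have "real (card ?A) * 25 \<le> 2^b"
    using assms by (simp only: mult_le_cancel_left_pos of_nat_0_less_iff)
  moreover have "card {l::bool list. length l = b \<and> (\<exists>t. 5 * sqrt b < real_of_int \<bar>spin_sum (take t l)\<bar>)}
      \<le> 2 * card ?A"
    unfolding m_iff by (rule card_partial_sum_escape_le[OF m])
  ultimately show ?thesis using of_nat_mono by fastforce
qed

text \<open>\<open>11/800 = 3/32 - 2/25\<close>.\<close>

lemma card_good_block:
  assumes "0 < b"
  shows "11/800 * 2^b \<le> real (card (good_block b))"
proof -
  let ?Pos = "{l::bool list. length l = b \<and> sqrt b / 2 \<le> real_of_int (spin_sum l)}"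
  let ?Bad = "{l::bool list. length l = b \<and> (\<exists>t. 5 * sqrt b < real_of_int \<bar>spin_sum (take t l)\<bar>)}"
  have "?Pos \<subseteq> good_block b \<union> ?Bad" by (auto simp: good_block_def not_less)
  then have split: "card ?Pos \<le> card (good_block b) + card ?Bad"
    by (intro card_le_card_Un_of_subset finite_bool_lists_such_that)
      (simp add: finite_bool_lists_such_that good_block_def)
  then have "real (card ?Pos) \<le> real (card (good_block b)) + real (card ?Bad)"
    using of_nat_mono[OF split] by simp
  with card_spin_sum_ge_half_sqrt[OF assms] card_partial_sum_exceeds_le[OF assms] show ?thesis
    by linarith
qed

definition conc :: "'a list set \<Rightarrow> 'a list set \<Rightarrow> 'a list set" where
  "conc A B = {a @ c | a c. a \<in> A \<and> c \<in> B}"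

lemma conc_eq_image: "conc A B = (\<lambda>(a, c). a @ c) ` (A \<times> B)"
  unfolding conc_def by auto

lemma finite_conc: "finite A \<Longrightarrow> finite B \<Longrightarrow> finite (conc A B)"
  unfolding conc_eq_image by simp

lemma card_conc:
  assumes "\<forall>a\<in>A. length a = k" "finite A" "finite B"
  shows "card (conc A B) = card A * card B"
proof -
  have "inj_on (\<lambda>(a, c). a @ c) (A \<times> B)"
    by (rule inj_onI) (use assms(1) in auto)
  then show ?thesis unfolding conc_eq_image by (simp add: card_image card_cartesian_product)
qed

fun block_chain :: "nat \<Rightarrow> nat \<Rightarrow> nat \<Rightarrow> bool list set" where
  "block_chain 0 b \<rho> = {l. length l = \<rho>}"
| "block_chain (Suc m) b \<rho> = conc (good_block b) (block_chain m b \<rho>)"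

lemma finite_good_block: "finite (good_block b)"
  unfolding good_block_def by (rule finite_bool_lists_such_that)

lemma length_block_chain: "l \<in> block_chain m b \<rho> \<Longrightarrow> length l = m * b + \<rho>"
  by (induction m arbitrary: l) (auto simp: conc_def good_block_def)

lemma finite_block_chain: "finite (block_chain m b \<rho>)"
  by (induction m) (auto simp: finite_bool_lists finite_conc finite_good_block)

lemma card_block_chain:
  assumes "0 < b"
  shows "(11/800)^m * 2^(m * b + \<rho>) \<le> real (card (block_chain m b \<rho>))"
proof (induction m)
  case 0
  then show ?case by (simp add: card_bool_lists)
next
  case (Suc m)
  have "card (block_chain (Suc m) b \<rho>) = card (good_block b) * card (block_chain m b \<rho>)"
    unfolding block_chain.simps
    by (rule card_conc[where k = b]) (simp_all add: finite_good_block finite_block_chain, simp add: good_block_def)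
  moreover have "11/800 * 2^b * ((11/800)^m * 2^(m * b + \<rho>)) \<le>
      real (card (good_block b)) * real (card (block_chain m b \<rho>))"
    by (rule mult_mono[OF card_good_block[OF assms] Suc]) auto
  ultimately show ?case by (simp add: power_add algebra_simps)
qed

lemma good_block_spin_sum_bounds:
  assumes "a \<in> good_block b"
  shows "sqrt b / 2 \<le> real_of_int (spin_sum a)" "real_of_int (spin_sum a) \<le> 5 * sqrt b"
    "- 5 * sqrt b \<le> real_of_int (spin_sum (take t a))"
    "- 5 * sqrt b \<le> real_of_int (spin_sum (drop t a))"
proof -
  have partial: "real_of_int \<bar>spin_sum (take t a)\<bar> \<le> 5 * sqrt b" for t
    using assms by (auto simp: good_block_def)
  show total: "sqrt b / 2 \<le> real_of_int (spin_sum a)"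
    using assms by (auto simp: good_block_def)
  show "real_of_int (spin_sum a) \<le> 5 * sqrt b"
    using partial[of "length a"] by simp
  show "- 5 * sqrt b \<le> real_of_int (spin_sum (take t a))"
    using partial[of t] by linarith
  have "spin_sum (drop t a) = spin_sum a - spin_sum (take t a)"
    by (metis append_take_drop_id spin_sum_simps(3) add_diff_cancel_left')
  then show "- 5 * sqrt b \<le> real_of_int (spin_sum (drop t a))"
    using partial[of t] total by simp
qed

lemma abs_spin_sum_le_real: "\<bar>real_of_int (spin_sum l)\<bar> \<le> real (length l)"
  using abs_spin_sum_le[of l] by linarith

lemma block_chain_spin_sum_bounds:
  assumes "l \<in> block_chain m b \<rho>"
  shows "real m * sqrt b / 2 - \<rho> \<le> real_of_int (spin_sum l) \<and>
    real_of_int (spin_sum l) \<le> 5 * real m * sqrt b + \<rho>"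
  using assms
proof (induction m arbitrary: l)
  case 0
  then show ?case using abs_spin_sum_le_real[of l] by auto
next
  case (Suc m)
  then obtain a c where "l = a @ c" "a \<in> good_block b" "c \<in> block_chain m b \<rho>"
    by (auto simp: conc_def)
  with Suc.IH show ?case
    using good_block_spin_sum_bounds(1,2) by (fastforce simp: algebra_simps add_divide_distrib)
qed

lemma block_chain_partial_sums_ge:
  assumes "l \<in> block_chain m b \<rho>"
  shows "- (5 * sqrt b + \<rho>) \<le> real_of_int (spin_sum (take t l)) \<and>
    - (5 * sqrt b + \<rho>) \<le> real_of_int (spin_sum (drop t l))"
  using assms
proof (induction m arbitrary: l t)
  case 0
  then have "\<bar>real_of_int (spin_sum (take t l))\<bar> \<le> \<rho>" "\<bar>real_of_int (spin_sum (drop t l))\<bar> \<le> \<rho>"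
    using abs_spin_sum_le_real[of "take t l"] abs_spin_sum_le_real[of "drop t l"] by auto
  then show ?case using real_sqrt_ge_zero[of b] by linarith
next
  case (Suc m)
  then obtain a c where l: "l = a @ c" and a: "a \<in> good_block b" and c: "c \<in> block_chain m b \<rho>"
    by (auto simp: conc_def)
  have length_a: "length a = b" using a by (simp add: good_block_def)
  show ?case
  proof (cases "t \<le> b")
    case True
    have "0 \<le> real m * sqrt b / 2" by simp
    then have "- real \<rho> \<le> real_of_int (spin_sum c)"
      using block_chain_spin_sum_bounds[OF c] by linarith
    then show ?thesis
      using True l length_a good_block_spin_sum_bounds(3,4)[OF a, of t] by simp
  next
    case False
    have "0 \<le> real_of_int (spin_sum a)"
      using good_block_spin_sum_bounds(1)[OF a] real_sqrt_ge_zero[of b] by linarith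
    then show ?thesis
      using False l length_a Suc.IH[OF c, of "t - b"] by simp
  qed
qed

section \<open>Superblocks\<close>

definition super_block :: "nat \<Rightarrow> nat \<Rightarrow> bool list set" where
  "super_block w K = block_chain K (w div K) (w mod K)"

lemma length_super_block: "Z \<in> super_block w K \<Longrightarrow> length Z = w"
  unfolding super_block_def by (drule length_block_chain) simp

lemma finite_super_block: "finite (super_block w K)"
  unfolding super_block_def by (rule finite_block_chain)

lemma card_super_block:
  assumes "K \<le> w" "0 < K"
  shows "(11/800)^K * 2^w \<le> real (card (super_block w K))"
proof -
  have "0 < w div K" using assms by (simp add: div_greater_zero_iff)
  from card_block_chain[OF this, of K "w mod K"] show ?thesis
    unfolding super_block_def by simp
qed

lemma sqrt_div_square_bounds:
  assumes "0 < c"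
  shows "real c * sqrt (real (w div (c * c))) \<le> sqrt (real w)"
    "sqrt (real w) \<le> real c * (sqrt (real (w div (c * c))) + 1)"
proof -
  let ?q = "real (w div (c * c))"
  have "(real c * sqrt ?q)^2 = real (c * c * (w div (c * c)))"
    by (simp add: power_mult_distrib power2_eq_square)
  also have "\<dots> \<le> real w" by (simp only: of_nat_le_iff times_div_less_eq_dividend)
  finally show "real c * sqrt ?q \<le> sqrt (real w)" by (rule real_le_rsqrt)
  have "w < c * c * (w div (c * c) + 1)"
    using assms by (simp add: dividend_less_times_div)
  then have "real w \<le> real c * real c * (?q + 1)"
    by (metis less_imp_le of_nat_1 of_nat_add of_nat_le_iff of_nat_mult)
  also have "\<dots> \<le> real c * real c * (sqrt ?q + 1)^2"
    by (intro mult_left_mono) (simp_all add: power2_eq_square algebra_simps)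
  also have "\<dots> = (real c * (sqrt ?q + 1))^2"
    by (simp add: power_mult_distrib power2_eq_square)
  finally show "sqrt (real w) \<le> real c * (sqrt ?q + 1)"
    by (rule real_le_lsqrt[rotated]) simp
qed

lemma super_block_spin_sum_bounds:
  assumes "Z \<in> super_block w K" "0 < K"
  shows "- (5 * sqrt (real (w div K)) + K) \<le> real_of_int (spin_sum (take t Z))"
    "- (5 * sqrt (real (w div K)) + K) \<le> real_of_int (spin_sum (drop t Z))"
    "real K * sqrt (real (w div K)) / 2 - K \<le> real_of_int (spin_sum Z)"
    "real_of_int (spin_sum Z) \<le> 5 * real K * sqrt (real (w div K)) + K"
proof -
  have "real (w mod K) \<le> real K" using assms by simp
  with block_chain_partial_sums_ge[OF assms(1)[unfolded super_block_def], of t]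
    block_chain_spin_sum_bounds[OF assms(1)[unfolded super_block_def]]
  show "- (5 * sqrt (real (w div K)) + K) \<le> real_of_int (spin_sum (take t Z))"
    "- (5 * sqrt (real (w div K)) + K) \<le> real_of_int (spin_sum (drop t Z))"
    "real K * sqrt (real (w div K)) / 2 - K \<le> real_of_int (spin_sum Z)"
    "real_of_int (spin_sum Z) \<le> 5 * real K * sqrt (real (w div K)) + K"
    by linarith+
qed

lemma super_block_64_bounds:
  assumes "Z \<in> super_block w 64"
  shows "- (5 * sqrt w / 8 + 64) \<le> real_of_int (spin_sum (take t Z))"
    "- (5 * sqrt w / 8 + 64) \<le> real_of_int (spin_sum (drop t Z))"
    "4 * sqrt w - 96 \<le> real_of_int (spin_sum Z)"
    "real_of_int (spin_sum Z) \<le> 40 * sqrt w + 64"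
  using super_block_spin_sum_bounds(1,2)[OF assms, of t] super_block_spin_sum_bounds(3,4)[OF assms]
    sqrt_div_square_bounds[of 8 w] by simp_all

lemma super_block_65536_bounds:
  assumes "Z \<in> super_block w 65536"
  shows "- (5 * sqrt w / 8 + 65536) \<le> real_of_int (spin_sum (take t Z))"
    "- (5 * sqrt w / 8 + 65536) \<le> real_of_int (spin_sum (drop t Z))"
    "128 * sqrt w - 98304 \<le> real_of_int (spin_sum Z)"
proof -
  have "256 * sqrt (real (w div 65536)) \<le> sqrt w"
    using sqrt_div_square_bounds(1)[of 256 w] by simp
  then have "5 * sqrt (real (w div 65536)) \<le> 5 * sqrt w / 8"
    using real_sqrt_ge_zero[of "real (w div 65536)"] by linarith
  then show "- (5 * sqrt w / 8 + 65536) \<le> real_of_int (spin_sum (take t Z))"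
    "- (5 * sqrt w / 8 + 65536) \<le> real_of_int (spin_sum (drop t Z))"
    using super_block_spin_sum_bounds(1,2)[OF assms, of t] by simp_all
  show "128 * sqrt w - 98304 \<le> real_of_int (spin_sum Z)"
    using super_block_spin_sum_bounds(3)[OF assms] sqrt_div_square_bounds(2)[of 256 w] by simp
qed

lemma super_block_partial_sums_ge:
  assumes "Z \<in> super_block w K" "K \<in> {64, 65536}"
  shows "- (5 * sqrt w / 8 + 65536) \<le> real_of_int (spin_sum (take t Z))"
    "- (5 * sqrt w / 8 + 65536) \<le> real_of_int (spin_sum (drop t Z))"
  using assms super_block_64_bounds(1,2)[of Z w t] super_block_65536_bounds(1,2)[of Z w t] by auto

section \<open>Seeds of incubators\<close>

text \<open>A seed is the labeling \<open>y\<close> of the \<open>(r + 2) w\<close> nodes of the block, read from its left end.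
  The window \<open>window_sum w y p\<close> is the bias of the node at offset \<open>w + p\<close>, so the three
  conditions say that the bias exceeds \<open>\<surd>w\<close> on the middle \<open>r w\<close> nodes and is minimal at
  the two ends of that stretch against the following, resp. preceding, \<open>w\<close> nodes.\<close>

definition window_sum :: "nat \<Rightarrow> bool list \<Rightarrow> nat \<Rightarrow> int" where
  "window_sum w y p = spin_sum (take (2 * w + 1) (drop p y))"

definition incubator_seed :: "nat \<Rightarrow> nat \<Rightarrow> bool list \<Rightarrow> bool" where
  "incubator_seed w r y \<longleftrightarrow>
     (\<forall>p < r * w. sqrt w < real_of_int (window_sum w y p)) \<and>
     (\<forall>u < w. window_sum w y 0 \<le> window_sum w y (w + u)) \<and>
     (\<forall>u < w. window_sum w y (r * w - 1) \<le> window_sum w y ((r - 2) * w + u))"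

lemma incubator_seed_replicate_True:
  assumes "1 \<le> w" "6 \<le> r"
  shows "incubator_seed w r (replicate ((r + 2) * w) True)"
proof -
  let ?y = "replicate ((r + 2) * w) True"
  have window: "window_sum w ?y p = int (2 * w + 1)" if "p + (2 * w + 1) \<le> (r + 2) * w" for p
    using that by (simp add: window_sum_def min_def)
  have length: "(r + 2) * w = r * w + 2 * w" "6 * w \<le> r * w" "(r - 2) * w + 2 * w = r * w"
    using assms(2) by (simp_all add: algebra_simps diff_mult_distrib)
  have "sqrt (real w) < real (2 * w + 1)"
    using real_le_lsqrt[of "real w" "real w"] assms(1) by (simp add: power2_eq_square)
  then have "sqrt (real w) < real_of_int (window_sum w ?y p)" if "p < r * w" for p
    using window[of p] that length by simp
  moreover have "window_sum w ?y 0 \<le> window_sum w ?y (w + u)"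
    "window_sum w ?y (r * w - 1) \<le> window_sum w ?y ((r - 2) * w + u)" if "u < w" for u
    using window[of 0] window[of "w + u"] window[of "r * w - 1"] window[of "(r - 2) * w + u"]
      that length assms(1) by simp_all
  ultimately show ?thesis
    unfolding incubator_seed_def by blast
qed

lemma drop_mult_concat:
  "\<forall>Z\<in>set Zs. length Z = w \<Longrightarrow> k \<le> length Zs \<Longrightarrow> drop (k * w) (concat Zs) = concat (drop k Zs)"
proof (induction k arbitrary: Zs)
  case 0
  then show ?case by simp
next
  case (Suc k)
  then obtain Z Zs' where "Zs = Z # Zs'" by (cases Zs) auto
  with Suc show ?case by simp
qed

lemma take_window_concat:
  assumes "\<forall>Z\<in>set Zs. length Z = w" "k + 2 < length Zs" "u < w"
  shows "take (2 * w + 1) (drop (k * w + u) (concat Zs)) =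
    drop u (Zs ! k) @ Zs ! (k + 1) @ take (u + 1) (Zs ! (k + 2))"
proof -
  have lengths: "length (Zs ! k) = w" "length (Zs ! (k + 1)) = w" "length (Zs ! (k + 2)) = w"
    using assms by auto
  have "drop k Zs = Zs ! k # Zs ! (k + 1) # Zs ! (k + 2) # drop (k + 3) Zs"
    using assms(2) by (simp add: Cons_nth_drop_Suc numeral_3_eq_3)
  then have "drop u (drop (k * w) (concat Zs)) =
      drop u (Zs ! k) @ Zs ! (k + 1) @ Zs ! (k + 2) @ concat (drop (k + 3) Zs)"
    using drop_mult_concat[of Zs w k] assms(1,2) lengths assms(3) by simp
  moreover have "drop u (drop (k * w) (concat Zs)) = drop (k * w + u) (concat Zs)"
    by (simp add: add.commute)
  moreover have "take (2 * w + 1) (drop u (Zs ! k) @ Zs ! (k + 1) @ Zs ! (k + 2) @ Y) =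
      drop u (Zs ! k) @ Zs ! (k + 1) @ take (u + 1) (Zs ! (k + 2))" for Y
    using lengths assms(3) by simp
  ultimately show ?thesis by metis
qed

text \<open>The two superblocks with many short good blocks have a much larger guaranteed drift;
  placed at indices \<open>2\<close> and \<open>r - 1\<close> they make the windows at the two ends of the
  stretch minimal.\<close>

locale seed_blocks =
  fixes w r :: nat and Zs :: "bool list list"
  assumes r: "6 \<le> r" and sqrt_w: "131072 \<le> sqrt w"
    and length_Zs: "length Zs = r + 2"
    and length_block: "\<And>j. j < r + 2 \<Longrightarrow> length (Zs ! j) = w"
    and take_ge: "\<And>j t. j < r + 2 \<Longrightarrow> - (5 * sqrt w / 8 + 65536) \<le> real_of_int (spin_sum (take t (Zs ! j)))"
    and drop_ge: "\<And>j t. j < r + 2 \<Longrightarrow> - (5 * sqrt w / 8 + 65536) \<le> real_of_int (spin_sum (drop t (Zs ! j)))"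
    and light: "\<And>j. j < r + 2 \<Longrightarrow> j \<noteq> 2 \<Longrightarrow> j \<noteq> r - 1 \<Longrightarrow>
      4 * sqrt w - 96 \<le> real_of_int (spin_sum (Zs ! j)) \<and> real_of_int (spin_sum (Zs ! j)) \<le> 40 * sqrt w + 64"
    and heavy: "\<And>j. j = 2 \<or> j = r - 1 \<Longrightarrow> 128 * sqrt w - 98304 \<le> real_of_int (spin_sum (Zs ! j))"
begin

lemma spin_sum_block_ge: "j < r + 2 \<Longrightarrow> 4 * sqrt w - 96 \<le> real_of_int (spin_sum (Zs ! j))"
  using light[of j] heavy[of j] sqrt_w by (cases "j = 2 \<or> j = r - 1") auto

lemma window_sum_eq:
  assumes "k < r" "u < w"
  shows "window_sum w (concat Zs) (k * w + u) =
    spin_sum (drop u (Zs ! k)) + spin_sum (Zs ! (k + 1)) + spin_sum (take (u + 1) (Zs ! (k + 2)))"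
proof -
  have "\<forall>Z\<in>set Zs. length Z = w" using length_block length_Zs by (auto simp: in_set_conv_nth)
  then show ?thesis
    using take_window_concat[of Zs w k u] assms length_Zs by (simp add: window_sum_def)
qed

lemma window_sum_gt:
  assumes "p < r * w"
  shows "sqrt w < real_of_int (window_sum w (concat Zs) p)"
proof -
  have w: "0 < w" using assms by (cases w) auto
  have k: "p div w < r" and u: "p mod w < w"
    using assms w by (simp_all add: less_mult_imp_div_less)
  have "p = p div w * w + p mod w" by simp
  then have "window_sum w (concat Zs) p = spin_sum (drop (p mod w) (Zs ! (p div w)))
      + spin_sum (Zs ! (p div w + 1)) + spin_sum (take (p mod w + 1) (Zs ! (p div w + 2)))"
    using window_sum_eq[OF k u] by simp
  then show ?thesis
    using drop_ge[of "p div w" "p mod w"] spin_sum_block_ge[of "p div w + 1"]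
      take_ge[of "p div w + 2" "p mod w + 1"] k sqrt_w by simp
qed

lemma window_sum_left_min:
  assumes "u < w"
  shows "window_sum w (concat Zs) 0 \<le> window_sum w (concat Zs) (w + u)"
proof -
  have left: "window_sum w (concat Zs) 0 =
      spin_sum (Zs ! 0) + spin_sum (Zs ! 1) + spin_sum (take 1 (Zs ! 2))"
    using window_sum_eq[of 0 0] r assms by (simp add: numeral_2_eq_2)
  have right: "window_sum w (concat Zs) (w + u) =
      spin_sum (drop u (Zs ! 1)) + spin_sum (Zs ! 2) + spin_sum (take (u + 1) (Zs ! 3))"
    using window_sum_eq[of 1 u] r assms by (simp add: numeral_3_eq_3 numeral_2_eq_2)
  have "spin_sum (take 1 (Zs ! 2)) \<le> 1"
    using abs_spin_sum_le[of "take 1 (Zs ! 2)"] by simp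
  moreover have "real_of_int (spin_sum (Zs ! 0)) \<le> 40 * sqrt w + 64"
    "real_of_int (spin_sum (Zs ! 1)) \<le> 40 * sqrt w + 64"
    using light[of 0] light[of 1] r by auto
  moreover have "- (5 * sqrt w / 8 + 65536) \<le> real_of_int (spin_sum (drop u (Zs ! 1)))"
    "- (5 * sqrt w / 8 + 65536) \<le> real_of_int (spin_sum (take (u + 1) (Zs ! 3)))"
    using drop_ge[of 1 u] take_ge[of 3 "u + 1"] r by auto
  moreover have "128 * sqrt w - 98304 \<le> real_of_int (spin_sum (Zs ! 2))"
    using heavy[of 2] by simp
  ultimately have "real_of_int (window_sum w (concat Zs) 0) \<le> real_of_int (window_sum w (concat Zs) (w + u))"
    unfolding left right of_int_add using sqrt_w by linarith
  then show ?thesis by simp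
qed

lemma window_sum_right_min:
  assumes "u < w"
  shows "window_sum w (concat Zs) (r * w - 1) \<le> window_sum w (concat Zs) ((r - 2) * w + u)"
proof -
  have "r * w - 1 = (r - 1) * w + (w - 1)" using r assms by (simp add: diff_mult_distrib)
  then have left: "window_sum w (concat Zs) (r * w - 1) =
      spin_sum (drop (w - 1) (Zs ! (r - 1))) + spin_sum (Zs ! r) + spin_sum (Zs ! (r + 1))"
    using window_sum_eq[of "r - 1" "w - 1"] r assms length_block[of "r + 1"] by simp
  have "Suc (r - 2) = r - 1" "Suc (Suc (r - 2)) = r" using r by auto
  then have right: "window_sum w (concat Zs) ((r - 2) * w + u) =
      spin_sum (drop u (Zs ! (r - 2))) + spin_sum (Zs ! (r - 1)) + spin_sum (take (u + 1) (Zs ! r))"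
    using window_sum_eq[of "r - 2" u] r assms by simp
  have "spin_sum (drop (w - 1) (Zs ! (r - 1))) \<le> 1"
    using abs_spin_sum_le[of "drop (w - 1) (Zs ! (r - 1))"] length_block[of "r - 1"] r by simp
  moreover have "real_of_int (spin_sum (Zs ! r)) \<le> 40 * sqrt w + 64"
    "real_of_int (spin_sum (Zs ! (r + 1))) \<le> 40 * sqrt w + 64"
    using light[of r] light[of "r + 1"] r by auto
  moreover have "- (5 * sqrt w / 8 + 65536) \<le> real_of_int (spin_sum (drop u (Zs ! (r - 2))))"
    "- (5 * sqrt w / 8 + 65536) \<le> real_of_int (spin_sum (take (u + 1) (Zs ! r)))"
    using drop_ge[of "r - 2" u] take_ge[of r "u + 1"] r by auto
  moreover have "128 * sqrt w - 98304 \<le> real_of_int (spin_sum (Zs ! (r - 1)))"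
    using heavy[of "r - 1"] by simp
  ultimately have "real_of_int (window_sum w (concat Zs) (r * w - 1)) \<le>
      real_of_int (window_sum w (concat Zs) ((r - 2) * w + u))"
    unfolding left right of_int_add using sqrt_w by linarith
  then show ?thesis by simp
qed

lemma incubator_seed: "incubator_seed w r (concat Zs)"
  unfolding incubator_seed_def
  using window_sum_gt window_sum_left_min window_sum_right_min by blast

end

fun super_block_seq :: "nat \<Rightarrow> nat list \<Rightarrow> bool list set" where
  "super_block_seq w [] = {[]}"
| "super_block_seq w (K # Ks) = conc (super_block w K) (super_block_seq w Ks)"

lemma super_block_seq_eq_concat:
  "y \<in> super_block_seq w Ks \<Longrightarrow>
    \<exists>Zs. y = concat Zs \<and> length Zs = length Ks \<and> (\<forall>j < length Ks. Zs ! j \<in> super_block w (Ks ! j))"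
proof (induction Ks arbitrary: y)
  case Nil
  then show ?case by simp
next
  case (Cons K Ks)
  then obtain a c where y: "y = a @ c" "a \<in> super_block w K" "c \<in> super_block_seq w Ks"
    by (auto simp: conc_def)
  from Cons.IH[OF y(3)] obtain Zs where
    "c = concat Zs" "length Zs = length Ks" "\<forall>j < length Ks. Zs ! j \<in> super_block w (Ks ! j)"
    by blast
  with y show ?case
    by (intro exI[of _ "a # Zs"]) (auto simp: nth_Cons split: nat.split)
qed

lemma length_super_block_seq: "y \<in> super_block_seq w Ks \<Longrightarrow> length y = w * length Ks"
  by (induction Ks arbitrary: y) (auto simp: conc_def length_super_block)

lemma finite_super_block_seq: "finite (super_block_seq w Ks)"
  by (induction Ks) (auto simp: finite_conc finite_super_block)

lemma card_super_block_seq: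
  assumes "\<forall>K\<in>set Ks. 0 < K \<and> K \<le> M \<and> M \<le> w"
  shows "((11/800)^M * 2^w)^length Ks \<le> real (card (super_block_seq w Ks))"
  using assms
proof (induction Ks)
  case Nil
  then show ?case by simp
next
  case (Cons K Ks)
  then have K: "0 < K" "K \<le> M" "M \<le> w" by auto
  have card_eq: "card (super_block_seq w (K # Ks)) = card (super_block w K) * card (super_block_seq w Ks)"
    unfolding super_block_seq.simps
    by (rule card_conc[where k = w]) (simp_all add: length_super_block finite_super_block finite_super_block_seq)
  have "(11/800::real)^M \<le> (11/800)^K"
    by (rule power_decreasing) (use K in auto)
  then have "(11/800)^M * 2^w \<le> (11/800)^K * (2::real)^w"
    by (rule mult_right_mono) simp
  also have "\<dots> \<le> real (card (super_block w K))"
    using card_super_block[of K w] K by simp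
  finally have block: "(11/800)^M * 2^w \<le> real (card (super_block w K))" .
  have "(11/800)^M * 2^w * ((11/800)^M * 2^w)^length Ks \<le>
      real (card (super_block w K)) * real (card (super_block_seq w Ks))"
    by (rule mult_mono[OF block Cons.IH]) (use Cons.prems in simp_all)
  then show ?case
    by (simp only: card_eq of_nat_mult length_Cons power_Suc)
qed

definition block_types :: "nat \<Rightarrow> nat list" where
  "block_types r = map (\<lambda>j. if j = 2 \<or> j = r - 1 then 65536 else 64) [0..<r + 2]"

lemma length_block_types [simp]: "length (block_types r) = r + 2"
  by (simp add: block_types_def)

lemma nth_block_types:
  "j < r + 2 \<Longrightarrow> block_types r ! j = (if j = 2 \<or> j = r - 1 then 65536 else 64)"
  by (simp add: block_types_def del: upt_Suc)

lemma card_super_block_seq_block_types: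
  assumes "65536 \<le> w"
  shows "((11/800)^65536 * 2^w)^(r + 2) \<le> real (card (super_block_seq w (block_types r)))"
proof -
  have "\<forall>K\<in>set (block_types r). 0 < K \<and> K \<le> 65536 \<and> 65536 \<le> w"
    using assms by (auto simp: block_types_def)
  from card_super_block_seq[OF this] show ?thesis
    unfolding length_block_types .
qed

lemma incubator_seed_of_super_block_seq:
  assumes "y \<in> super_block_seq w (block_types r)" "6 \<le> r" "2^34 \<le> w"
  shows "incubator_seed w r y"
proof -
  obtain Zs where y: "y = concat Zs" and length_Zs: "length Zs = r + 2" and
    "\<forall>j < r + 2. Zs ! j \<in> super_block w (block_types r ! j)"
    using super_block_seq_eq_concat[OF assms(1)] by auto
  then have blocks: "Zs ! j \<in> super_block w (if j = 2 \<or> j = r - 1 then 65536 else 64)"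
    if "j < r + 2" for j
    using that nth_block_types by simp
  have "(131072::real)^2 \<le> real w" using assms(3) by simp
  then have "131072 \<le> sqrt (real w)" by (rule real_le_rsqrt)
  then interpret seed_blocks w r Zs
  proof unfold_locales
    fix j t assume j: "j < r + 2"
    show "length (Zs ! j) = w" using blocks[OF j] length_super_block by blast
    have "(if j = 2 \<or> j = r - 1 then 65536 else 64) \<in> {64, 65536 :: nat}" by simp
    with blocks[OF j] show "- (5 * sqrt w / 8 + 65536) \<le> real_of_int (spin_sum (take t (Zs ! j)))"
      "- (5 * sqrt w / 8 + 65536) \<le> real_of_int (spin_sum (drop t (Zs ! j)))"
      by (blast dest: super_block_partial_sums_ge)+
  next
    fix j assume "j < r + 2" "j \<noteq> 2" "j \<noteq> r - 1"
    then show "4 * sqrt w - 96 \<le> real_of_int (spin_sum (Zs ! j)) \<and>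
        real_of_int (spin_sum (Zs ! j)) \<le> 40 * sqrt w + 64"
      using blocks[of j] super_block_64_bounds(3,4)[of "Zs ! j" w] by simp
  next
    fix j assume "j = 2 \<or> j = r - 1"
    then show "128 * sqrt w - 98304 \<le> real_of_int (spin_sum (Zs ! j))"
      using blocks[of j] assms(2) super_block_65536_bounds(3)[of "Zs ! j" w] by auto
  qed (use assms(2) length_Zs in auto)
  show ?thesis unfolding y by (rule incubator_seed)
qed

section \<open>From seeds to incubators\<close>

lemma spin_sum_take_drop:
  "p + m \<le> length y \<Longrightarrow> spin_sum (take m (drop p y)) = (\<Sum>q<m. spin (y ! (p + q)))"
proof (induction m)
  case 0
  then show ?case by simp
next
  case (Suc m)
  then have "take (Suc m) (drop p y) = take m (drop p y) @ [y ! (p + m)]"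
    by (simp add: take_Suc_conv_app_nth)
  with Suc show ?case by simp
qed

lemma sum_int_atLeastAtMost_shift:
  "(\<Sum>j\<in>{a .. a + int m}. f j) = (\<Sum>q\<le>m. f (a + int q))"
proof -
  have "{a .. a + int m} = (\<lambda>q. a + int q) ` {..m}"
  proof (rule set_eqI)
    fix j
    show "j \<in> {a .. a + int m} \<longleftrightarrow> j \<in> (\<lambda>q. a + int q) ` {..m}"
    proof
      assume "j \<in> {a .. a + int m}"
      then have "j = a + int (nat (j - a))" "nat (j - a) \<in> {..m}" by auto
      then show "j \<in> (\<lambda>q. a + int q) ` {..m}" by (rule rev_image_eqI[rotated])
    qed auto
  qed
  moreover have "inj_on (\<lambda>q. a + int q) {..m}" by (rule inj_onI) simp
  ultimately show ?thesis by (simp add: sum.reindex)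
qed

lemma lab_sign_append:
  assumes "length y \<le> n" "q < length y"
  shows "lab_sign n (y @ z) (int n * k + int q) = spin (y ! q)"
proof -
  have "(int n * k + int q) mod int n = int q" using assms by simp
  then show ?thesis using assms unfolding lab_sign_def spin_def by (simp add: nth_append)
qed

lemma bias0_append:
  assumes "length y \<le> n" "p + 2 * w < length y"
  shows "bias0 n w (y @ z) (int w + int n * k + int p) = window_sum w y p"
proof -
  have window: "{int w + int n * k + int p - int w .. int w + int n * k + int p + int w} =
      {int n * k + int p .. int n * k + int p + int (2 * w)}"
    by auto
  have "bias0 n w (y @ z) (int w + int n * k + int p) =
      (\<Sum>q\<le>2 * w. lab_sign n (y @ z) (int n * k + int p + int q))"
    unfolding bias0_def window sum_int_atLeastAtMost_shift ..
  also have "\<dots> = (\<Sum>q\<le>2 * w. spin (y ! (p + q)))"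
  proof (rule sum.cong[OF refl])
    fix q assume "q \<in> {..2 * w}"
    then show "lab_sign n (y @ z) (int n * k + int p + int q) = spin (y ! (p + q))"
      using assms lab_sign_append[of y n "p + q" z k] by (simp add: add.assoc)
  qed
  also have "\<dots> = window_sum w y p"
    unfolding window_sum_def using assms
    by (simp add: spin_sum_take_drop lessThan_Suc_atMost[symmetric])
  finally show ?thesis .
qed

lemma exists_window_minima:
  fixes f :: "nat \<Rightarrow> 'a::linorder"
  assumes "0 < w" "2 \<le> r"
    and left: "\<And>u. u < w \<Longrightarrow> f 0 \<le> f (w + u)"
    and right: "\<And>u. u < w \<Longrightarrow> f (r * w - 1) \<le> f ((r - 2) * w + u)"
  obtains pa pe where "pa < w" "r * w - w \<le> pe" "pe < r * w"
    "\<And>q. pa \<le> q \<Longrightarrow> q \<le> pa + w \<Longrightarrow> f pa \<le> f q"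
    "\<And>q. pe - w \<le> q \<Longrightarrow> q \<le> pe \<Longrightarrow> f pe \<le> f q"
proof -
  define pa where "pa = arg_min_on f {0..<w}"
  define pe where "pe = arg_min_on f {r * w - w..<r * w}"
  have rw: "2 * w \<le> r * w" using assms(2) by simp
  have left_ne: "{0..<w} \<noteq> {}" and right_ne: "{r * w - w..<r * w} \<noteq> {}"
    using assms rw by auto
  have pa: "pa < w" "\<And>q. q < w \<Longrightarrow> f pa \<le> f q"
    unfolding pa_def using arg_min_if_finite(1)[OF _ left_ne, of f] arg_min_least[OF _ left_ne, of _ f]
    by auto
  have pe: "r * w - w \<le> pe" "pe < r * w" "\<And>q. r * w - w \<le> q \<Longrightarrow> q < r * w \<Longrightarrow> f pe \<le> f q"
    unfolding pe_def using arg_min_if_finite(1)[OF _ right_ne, of f] arg_min_least[OF _ right_ne, of _ f]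
    by auto
  show thesis
  proof (rule that[OF pa(1) pe(1,2)])
    fix q assume q: "pa \<le> q" "q \<le> pa + w"
    show "f pa \<le> f q"
    proof (cases "q < w")
      case False
      then have "f 0 \<le> f (w + (q - w))" using left[of "q - w"] q pa(1) by simp
      then show ?thesis using pa(2)[of 0] assms(1) False by simp
    qed (rule pa(2))
  next
    fix q assume q: "pe - w \<le> q" "q \<le> pe"
    show "f pe \<le> f q"
    proof (cases "r * w - w \<le> q")
      case False
      have "(r - 2) * w + 2 * w = r * w" using assms(2) by (simp add: diff_mult_distrib)
      then have "(r - 2) * w + (q - (r - 2) * w) = q" "q - (r - 2) * w < w"
        using q pe(1) False by linarith+
      then have "f (r * w - 1) \<le> f q" using right[of "q - (r - 2) * w"] by simp
      moreover have "f pe \<le> f (r * w - 1)" using pe(3)[of "r * w - 1"] assms(1) rw by simp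
      ultimately show ?thesis by (rule order_trans[rotated])
    qed (use q pe in simp)
  qed
qed

lemma x_firewall_incubator_between_minima:
  fixes f :: "nat \<Rightarrow> int"
  assumes bias: "\<And>p. p < r * w \<Longrightarrow> bias0 n w xs (s + int p) = f p"
    and above: "\<And>p. p < r * w \<Longrightarrow> sqrt w < real_of_int (f p)"
    and ends: "pa < w" "3 * w \<le> pe" "pe < r * w" "pe - pa + 1 \<le> n"
    and min_left: "\<And>q. pa \<le> q \<Longrightarrow> q \<le> pa + w \<Longrightarrow> f pa \<le> f q"
    and min_right: "\<And>q. pe - w \<le> q \<Longrightarrow> q \<le> pe \<Longrightarrow> f pe \<le> f q"
  shows "x_firewall_incubator n w xs (s + int pa) (pe - pa + 1)"
proof -
  have end_L: "s + int pa + int (pe - pa + 1) - 1 = s + int pe"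
    using ends(1,2) by (simp add: of_nat_diff)
  have offset: "\<exists>p. i = s + int p \<and> a \<le> p \<and> p \<le> b" if "i \<in> {s + int a .. s + int b}" for i a b
    using that by (intro exI[of _ "nat (i - s)"]) auto
  show ?thesis
    unfolding x_firewall_incubator_def end_L
  proof (intro conjI ballI)
    show "2 * (w + 1) \<le> pe - pa + 1" "pe - pa + 1 \<le> n" using ends by auto
  next
    fix i assume "i \<in> {s + int pa .. s + int pe}"
    then obtain p where "i = s + int p" "p \<le> pe" using offset[of i pa pe] by blast
    then show "sqrt (real w) < real_of_int (bias0 n w xs i)"
      using bias[of p] above[of p] ends(3) by simp
  next
    fix i assume "i \<in> {s + int pa .. s + int pa + int w}"
    then obtain p where "i = s + int p" "pa \<le> p" "p \<le> pa + w" using offset[of i pa "pa + w"] by auto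
    then show "bias0 n w xs (s + int pa) \<le> bias0 n w xs i"
      using bias[of p] bias[of pa] min_left[of p] ends by simp
  next
    fix i assume i: "i \<in> {s + int pe - int w .. s + int pe}"
    define p where "p = nat (i - s)"
    have "i = s + int p" "pe - w \<le> p" "p \<le> pe"
      using i ends(2) unfolding p_def by auto
    then show "bias0 n w xs (s + int pe) \<le> bias0 n w xs i"
      using bias[of p] bias[of pe] min_right[of p] ends(3) by simp
  qed
qed

lemma incubator_event_of_seed:
  assumes "incubator_seed w r y" "length y = (r + 2) * w" "(r + 2) * w \<le> n" "1 \<le> w" "4 \<le> r"
  shows "incubator_event n w r (int w + int n * k) (y @ z)"
proof -
  define s where "s = int w + int n * k"
  define f where "f = window_sum w y"
  have bias: "bias0 n w (y @ z) (s + int p) = f p" if "p < r * w" for p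
    using bias0_append[of y n p w z k] assms(2,3) that unfolding s_def f_def
    by (simp add: algebra_simps)
  have above: "\<And>p. p < r * w \<Longrightarrow> sqrt w < real_of_int (f p)"
    and left: "\<And>u. u < w \<Longrightarrow> f 0 \<le> f (w + u)"
    and right: "\<And>u. u < w \<Longrightarrow> f (r * w - 1) \<le> f ((r - 2) * w + u)"
    using assms(1) unfolding incubator_seed_def f_def by blast+
  have "0 < w" "2 \<le> r" using assms(4,5) by simp_all
  then obtain pa pe where pa: "pa < w" and pe: "r * w - w \<le> pe" "pe < r * w"
    and min_left: "\<And>q. pa \<le> q \<Longrightarrow> q \<le> pa + w \<Longrightarrow> f pa \<le> f q"
    and min_right: "\<And>q. pe - w \<le> q \<Longrightarrow> q \<le> pe \<Longrightarrow> f pe \<le> f q"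
    using exists_window_minima[of w r f, OF _ _ left right] by blast
  have "4 * w \<le> r * w" using assms(5) by simp
  then have pe_ge: "3 * w \<le> pe" "int (r * w) - int w \<le> int pe" "int pe < int (r * w)"
    using pe by linarith+
  have "r * w \<le> (r + 2) * w" by simp
  then have "pe - pa + 1 \<le> n" using pe(2) assms(3) by linarith
  then have "x_firewall_incubator n w (y @ z) (s + int pa) (pe - pa + 1)"
    using x_firewall_incubator_between_minima[OF bias above pa pe_ge(1) pe(2) _ min_left min_right] by simp
  moreover have "s + int pa + int (pe - pa + 1) - 1 = s + int pe" using pa pe_ge by (simp add: of_nat_diff)
  ultimately show ?thesis
    unfolding incubator_event_def s_def[symmetric] using pa pe pe_ge
    by (intro exI[of _ "s + int pa"] exI[of _ "pe - pa + 1"]) simp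
qed

lemma lab_sign_rotate:
  assumes "length xs = n" "0 < n"
  shows "lab_sign n (rotate d xs) i = lab_sign n xs (i + int d)"
proof -
  have "nat (i mod int n) < length xs" using assms by (simp add: nat_less_iff)
  moreover have "(d + nat (i mod int n)) mod n = nat ((i + int d) mod int n)"
  proof -
    have "int ((d + nat (i mod int n)) mod n) = (int d + i mod int n) mod int n"
      using assms(2) by (simp add: zmod_int)
    also have "\<dots> = (i + int d) mod int n" by (simp add: mod_add_right_eq add.commute)
    finally show ?thesis by linarith
  qed
  ultimately show ?thesis unfolding lab_sign_def using assms(1) by (simp add: nth_rotate)
qed

lemma bias0_rotate:
  assumes "length xs = n" "0 < n"
  shows "bias0 n w (rotate d xs) i = bias0 n w xs (i + int d)"
proof -
  have inj: "inj_on (\<lambda>j. j + int d) {i - int w .. i + int w}" by (rule inj_onI) simp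
  have "bias0 n w (rotate d xs) i = (\<Sum>j\<in>(\<lambda>j. j + int d) ` {i - int w .. i + int w}. lab_sign n xs j)"
    unfolding bias0_def sum.reindex[OF inj] comp_def using lab_sign_rotate[OF assms] by simp
  also have "(\<lambda>j. j + int d) ` {i - int w .. i + int w} = {i + int d - int w .. i + int d + int w}"
    unfolding image_add_atLeastAtMost' by (simp add: algebra_simps)
  finally show ?thesis unfolding bias0_def .
qed

lemma x_firewall_incubator_rotate:
  assumes "length xs = n" "0 < n" "x_firewall_incubator n w xs (a + int d) L"
  shows "x_firewall_incubator n w (rotate d xs) a L"
proof -
  note rotate = bias0_rotate[OF assms(1,2)]
  from assms(3) have size: "2 * (w + 1) \<le> L" "L \<le> n"
    and above: "\<forall>i\<in>{a + int d .. a + int d + int L - 1}. real_of_int (bias0 n w xs i) > sqrt (real w)"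
    and left: "\<forall>i\<in>{a + int d .. a + int d + int w}. bias0 n w xs (a + int d) \<le> bias0 n w xs i"
    and right: "\<forall>i\<in>{a + int d + int L - 1 - int w .. a + int d + int L - 1}.
      bias0 n w xs (a + int d + int L - 1) \<le> bias0 n w xs i"
    unfolding x_firewall_incubator_def by auto
  show ?thesis unfolding x_firewall_incubator_def
  proof (intro conjI ballI)
    fix i assume "i \<in> {a .. a + int L - 1}"
    then have "i + int d \<in> {a + int d .. a + int d + int L - 1}" by auto
    then show "real_of_int (bias0 n w (rotate d xs) i) > sqrt (real w)" using above rotate by simp
  next
    fix i assume "i \<in> {a .. a + int w}"
    then have "i + int d \<in> {a + int d .. a + int d + int w}" by auto
    then show "bias0 n w (rotate d xs) a \<le> bias0 n w (rotate d xs) i" using left rotate by simp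
  next
    fix i assume "i \<in> {a + int L - 1 - int w .. a + int L - 1}"
    then have "i + int d \<in> {a + int d + int L - 1 - int w .. a + int d + int L - 1}" by auto
    moreover have "a + int L - 1 + int d = a + int d + int L - 1" by simp
    ultimately show "bias0 n w (rotate d xs) (a + int L - 1) \<le> bias0 n w (rotate d xs) i"
      using right rotate by metis
  qed (use size in auto)
qed

lemma incubator_event_rotate:
  assumes "length xs = n" "0 < n" "incubator_event n w r (s + int d) xs"
  shows "incubator_event n w r s (rotate d xs)"
proof -
  from assms(3) obtain a L where a: "s + int d \<le> a" "a \<le> s + int d + int w - 1"
    and end_a: "s + int d + int (r * w) - int w \<le> a + int L - 1" "a + int L - 1 \<le> s + int d + int (r * w) - 1"
    and incubator: "x_firewall_incubator n w xs a L"
    unfolding incubator_event_def atLeastAtMost_iff by blast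
  have "x_firewall_incubator n w (rotate d xs) (a - int d) L"
    using incubator x_firewall_incubator_rotate[OF assms(1,2), of w "a - int d" d L] by simp
  then show ?thesis
    unfolding incubator_event_def using a end_a by (intro exI[of _ "a - int d"] exI[of _ L]) simp
qed

lemma card_incubator_event_shift:
  assumes "0 < n"
  shows "card {xs. length xs = n \<and> incubator_event n w r (s + int d) xs} \<le>
    card {xs. length xs = n \<and> incubator_event n w r s xs}"
proof -
  let ?E = "\<lambda>t. {xs. length xs = n \<and> incubator_event n w r t xs}"
  have "inj (rotate d :: bool list \<Rightarrow> bool list)"
    unfolding rotate_def by (rule inj_fn[OF inj_rotate1])
  then have "card (?E (s + int d)) = card (rotate d ` ?E (s + int d))"
    by (rule card_image[symmetric, OF inj_on_subset[OF _ subset_UNIV]])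
  also have "\<dots> \<le> card (?E s)"
  proof (rule card_mono[OF finite_bool_lists_such_that])
    show "rotate d ` ?E (s + int d) \<subseteq> ?E s"
    proof
      fix x assume "x \<in> rotate d ` ?E (s + int d)"
      then obtain xs where "x = rotate d xs" "length xs = n" "incubator_event n w r (s + int d) xs"
        by blast
      then show "x \<in> ?E s" using incubator_event_rotate[OF _ assms, of xs] by simp
    qed
  qed
  finally show ?thesis .
qed

lemma exists_shift_to_residue:
  assumes "0 < n"
  obtains d :: nat and k :: int where "s + int d = t + int n * k"
proof
  show "s + int (nat ((t - s) mod int n)) = t + int n * (- ((t - s) div int n))"
    using assms minus_mult_div_eq_mod[of "t - s" "int n"] by simp
qed

lemma card_incubator_event_ge_card_seeds:
  assumes "finite Y" "\<And>y. y \<in> Y \<Longrightarrow> incubator_seed w r y \<and> length y = (r + 2) * w"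
    and "(r + 2) * w \<le> n" "1 \<le> w" "4 \<le> r"
  shows "card Y * 2^(n - (r + 2) * w) \<le> card {xs. length xs = n \<and> incubator_event n w r s xs}"
proof -
  let ?R = "(r + 2) * w"
  let ?E = "\<lambda>t. {xs. length xs = n \<and> incubator_event n w r t xs}"
  have "w \<le> ?R" by simp
  then have n: "0 < n" using assms(3,4) by linarith
  obtain d k where aligned: "s + int d = int w + int n * k"
    using exists_shift_to_residue[OF n] .
  have "\<forall>y\<in>Y. length y = ?R" using assms(2) by blast
  then have "card Y * 2^(n - ?R) = card (conc Y {z. length z = n - ?R})"
    by (simp only: card_conc[OF _ assms(1) finite_bool_lists] card_bool_lists)
  also have "\<dots> \<le> card (?E (s + int d))"
  proof (rule card_mono[OF finite_bool_lists_such_that], rule subsetI)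
    fix x assume "x \<in> conc Y {z. length z = n - ?R}"
    then obtain y z where "x = y @ z" "y \<in> Y" "length z = n - ?R" by (auto simp: conc_def)
    then show "x \<in> ?E (s + int d)"
      unfolding aligned using incubator_event_of_seed[OF _ _ assms(3-5), of y k z] assms(2,3) by auto
  qed
  also have "\<dots> \<le> card (?E s)" by (rule card_incubator_event_shift[OF n])
  finally show ?thesis .
qed

lemma incubator_prob_ge_card_seeds:
  assumes "finite Y" "\<And>y. y \<in> Y \<Longrightarrow> incubator_seed w r y \<and> length y = (r + 2) * w"
    and "(r + 2) * w \<le> n" "1 \<le> w" "4 \<le> r"
  shows "real (card Y) / 2^((r + 2) * w) \<le> incubator_prob n w r s"
proof -
  let ?R = "(r + 2) * w"
  have pow: "(2::real)^?R * 2^(n - ?R) = 2^n"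
    by (metis assms(3) le_add_diff_inverse power_add)
  have "real (card Y) / 2^?R = real (card Y) * 2^(n - ?R) / (2^?R * 2^(n - ?R))"
    by simp
  also have "\<dots> = real (card Y * 2^(n - ?R)) / 2^n"
    unfolding pow by simp
  also have "\<dots> \<le> real (card {xs. length xs = n \<and> incubator_event n w r s xs}) / 2^n"
    using of_nat_mono[OF card_incubator_event_ge_card_seeds[OF assms, of s]]
    by (intro divide_right_mono) simp_all
  finally show ?thesis unfolding incubator_prob_def .
qed

lemma block_fits_of_ratio:
  assumes "1 \<le> w" "real r < real n / real w - 2"
  shows "(r + 2) * w \<le> n"
proof -
  have "0 < real w" using assms(1) by simp
  then have "real ((r + 2) * w) < real n"
    using assms(2) by (simp add: pos_less_divide_eq field_simps)
  then show ?thesis unfolding of_nat_less_iff by simp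
qed

lemma incubator_prob_ge_small_w:
  assumes "1 \<le> w" "6 \<le> r" "(r + 2) * w \<le> n"
  shows "(1/2)^((r + 2) * w) \<le> incubator_prob n w r s"
  using incubator_prob_ge_card_seeds[of "{replicate ((r + 2) * w) True}" w r n s]
    incubator_seed_replicate_True[OF assms(1,2)] assms
  by (simp add: power_one_over)

text \<open>Numeral powers such as \<open>(11/800)^65536\<close> are kept behind local or global
  definitions and only unfolded by plain rewriting: the simplifier would try to evaluate them.\<close>

lemma incubator_prob_ge_large_w:
  assumes "2^34 \<le> w" "6 \<le> r" "(r + 2) * w \<le> n"
  shows "((11/800)^65536)^(r + 2) \<le> incubator_prob n w r s"
proof -
  let ?Y = "super_block_seq w (block_types r)"
  define \<gamma> :: real where "\<gamma> = (11/800)^65536"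
  have card: "(\<gamma> * 2^w)^(r + 2) \<le> real (card ?Y)"
    unfolding \<gamma>_def by (rule card_super_block_seq_block_types) (use assms(1) in simp)
  have split: "(\<gamma> * 2^w)^(r + 2) = \<gamma>^(r + 2) * 2^((r + 2) * w)"
    by (metis power_mult power_mult_distrib mult.commute)
  have "\<gamma>^(r + 2) * 2^((r + 2) * w) \<le> real (card ?Y)" using card unfolding split .
  then have "\<gamma>^(r + 2) \<le> real (card ?Y) / 2^((r + 2) * w)"
    by (simp add: pos_le_divide_eq)
  also have "\<dots> \<le> incubator_prob n w r s"
  proof (rule incubator_prob_ge_card_seeds[OF finite_super_block_seq _ assms(3)])
    fix y assume "y \<in> ?Y"
    then show "incubator_seed w r y \<and> length y = (r + 2) * w"
      using incubator_seed_of_super_block_seq[OF _ assms(2,1)] length_super_block_seq[of y w]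
      by (simp add: mult.commute)
  qed (use assms in simp_all)
  finally show ?thesis unfolding \<gamma>_def .
qed

definition incubator_rate :: real where
  "incubator_rate = ((11/800)^65536)^2 * (1/2)^(2^35)"

lemma incubator_rate_pos: "0 < incubator_rate"
  unfolding incubator_rate_def by (intro mult_pos_pos zero_less_power) simp_all

lemma incubator_rate_power_le_large_w:
  assumes "2 \<le> r"
  shows "incubator_rate^r \<le> ((11/800)^65536)^(r + 2)"
proof -
  define \<gamma> :: real where "\<gamma> = (11/800)^65536"
  define h :: real where "h = (1/2)^(2^35)"
  have \<gamma>: "0 < \<gamma>" "\<gamma> \<le> 1" unfolding \<gamma>_def
    by (rule zero_less_power, simp) (rule power_le_one, simp_all)
  have h: "0 < h" "h \<le> 1" unfolding h_def
    by (rule zero_less_power, simp) (rule power_le_one, simp_all)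
  have "incubator_rate^r \<le> (\<gamma>^2)^r"
    unfolding incubator_rate_def \<gamma>_def[symmetric] h_def[symmetric] using \<gamma> h
    by (intro power_mono) (simp_all add: mult_le_cancel_left1)
  also have "\<dots> \<le> \<gamma>^(r + 2)"
    unfolding power_mult[symmetric] using \<gamma> assms by (intro power_decreasing) simp_all
  finally show ?thesis unfolding \<gamma>_def .
qed

lemma incubator_rate_power_le_small_w:
  assumes "w < 2^34" "2 \<le> r"
  shows "incubator_rate^r \<le> (1/2)^((r + 2) * w)"
proof -
  define \<gamma> :: real where "\<gamma> = (11/800)^65536"
  define h :: real where "h = (1/2)^(2^35)"
  have \<gamma>: "0 < \<gamma>" "\<gamma> \<le> 1" unfolding \<gamma>_def
    by (rule zero_less_power, simp) (rule power_le_one, simp_all)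
  have h: "0 < h" "h \<le> 1" unfolding h_def
    by (rule zero_less_power, simp) (rule power_le_one, simp_all)
  have "\<gamma>^2 \<le> 1" using \<gamma> by (simp add: power_le_one)
  then have "incubator_rate^r \<le> h^r"
    unfolding incubator_rate_def \<gamma>_def[symmetric] h_def[symmetric] using \<gamma> h
    by (intro power_mono) (simp_all add: mult_le_cancel_right1)
  also have "\<dots> = (1/2)^(2^35 * r)" unfolding h_def power_mult ..
  also have "\<dots> \<le> (1/2)^((r + 2) * w)"
  proof (rule power_decreasing)
    have "(r + 2) * w \<le> (2 * r) * 2^34" using assms by (intro mult_mono) simp_all
    then show "(r + 2) * w \<le> 2^35 * r" by simp
  qed simp_all
  finally show ?thesis .
qed

theorem proposition2:
  shows "\<exists>c::real. c > 0 \<and>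
    (\<forall>(n::nat) (w::nat) (r::nat) (s::int).
       1 \<le> w \<longrightarrow> 6 \<le> r \<longrightarrow> real r < real n / real w - 2 \<longrightarrow>
       incubator_prob n w r s \<ge> c ^ r)"
proof (intro exI conjI allI impI)
  show "0 < incubator_rate" by (rule incubator_rate_pos)
  fix n w r :: nat and s :: int
  assume w: "1 \<le> w" and r: "6 \<le> r" and ratio: "real r < real n / real w - 2"
  have block: "(r + 2) * w \<le> n" using block_fits_of_ratio[OF w ratio] .
  show "incubator_rate^r \<le> incubator_prob n w r s"
  proof (cases "2^34 \<le> w")
    case True
    then show ?thesis
      using order_trans[OF incubator_rate_power_le_large_w incubator_prob_ge_large_w[OF True r block]] r
      by simp
  next
    case False
    then show ?thesis
      using order_trans[OF incubator_rate_power_le_small_w incubator_prob_ge_small_w[OF w r block]] r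
      by simp
  qed
qed

end
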